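(* Fix $p\in(0,1/2]$ and an integer $k\ge 1$. There exists $\theta=\theta(p,k)>0$ such that the following holds for every $n$. If $M$ is a $k\times n$ real matrix whose rows are orthonormal vectors and $x$ is a random vector in $\mathbb{R}^n$ with independent $\operatorname{Ber}(p)$ coordinates, then \[\mathcal{L}(Mx,\theta)\le (1-p)^k.\]
   Context: $\operatorname{Ber}(p)$ takes value $1$ with probability $p$ and $0$ with probability $1-p$. For an $\mathbb{R}^N$-valued random variable $\zeta$ and $r\ge 0$, the Lévy concentration function is $\mathcal{L}(\zeta,r)=\sup_{z\in\mathbb{R}^N}\mathbb{P}[\|\zeta-z\|_2\le r]$. *)

theory Defs
  imports "HOL-Probability.Probability"
begin

text \<open>Vectors in R^N are represented as functions nat => real, only coordinates i < N matter.
  Euclidean distance on the first N coordinates.\<close>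
definition dist_N :: "nat \<Rightarrow> (nat \<Rightarrow> real) \<Rightarrow> (nat \<Rightarrow> real) \<Rightarrow> real" where
  "dist_N N v w = sqrt (\<Sum>i<N. (v i - w i)^2)"

definition levy_conc :: "nat \<Rightarrow> (nat \<Rightarrow> real) pmf \<Rightarrow> real \<Rightarrow> real" where
  "levy_conc N \<zeta> r = (SUP z \<in> {z :: nat \<Rightarrow> real. \<forall>i\<ge>N. z i = 0}.
       measure_pmf.prob \<zeta> {v. dist_N N v z \<le> r})"

text \<open>Random vector with n independent Ber(p) coordinates (True = 1).\<close>
definition ber_vec :: "real \<Rightarrow> nat \<Rightarrow> (nat \<Rightarrow> bool) pmf" where
  "ber_vec p n = Pi_pmf {..<n} False (\<lambda>_. bernoulli_pmf p)"

definition mat_image :: "nat \<Rightarrow> nat \<Rightarrow> (nat \<Rightarrow> nat \<Rightarrow> real) \<Rightarrow> (nat \<Rightarrow> bool) \<Rightarrow> (nat \<Rightarrow> real)" where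
  "mat_image k n M x = (\<lambda>i. if i < k then (\<Sum>j<n. M i j * of_bool (x j)) else 0)"

definition orthonormal_rows :: "nat \<Rightarrow> nat \<Rightarrow> (nat \<Rightarrow> nat \<Rightarrow> real) \<Rightarrow> bool" where
  "orthonormal_rows k n M \<longleftrightarrow>
     (\<forall>i<k. \<forall>i'<k. (\<Sum>j<n. M i j * M i' j) = (if i = i' then 1 else 0))"

end

theory Submission
  imports Defs
begin

(* If some column j of the matrix has Euclidean norm
   above 2\<theta>, flipping x_j moves Mx by more than 2\<theta>, so at most one value of x_j puts Mx
   into a given \<theta>-ball, and averaging over x_j costs a factor 1 - p.  A Householder
   reflection turns column j into a multiple of the last basis vector; the other rotated rows
   ignore x_j and project the ball into a ball of one dimension less, where induction applies.
   If every column has norm at most 2\<theta>, the first row alone is a unit vector with all entries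
   at most 2\<theta>, and an Esseen-type Fourier bound (the characteristic function of a Bernoulli
   sum decays like exp (-p c^2 / 6)) makes its \<theta>-small-ball probability below (1 - p)^k once
   \<theta> is small. *)

lemma cos_le_quartic: "cos (x::real) \<le> 1 - x\<^sup>2 / 2 + x ^ 4 / 24"
proof -
  obtain t where "cos x = (\<Sum>m<4. cos_coeff m * x ^ m) + cos (t + 1/2 * real 4 * pi) / fact 4 * x ^ 4"
    using Maclaurin_cos_expansion[of x 4] by blast
  moreover have "(\<Sum>m<4. cos_coeff m * x ^ m) = 1 - x\<^sup>2 / 2"
    by (simp add: lessThan_nat_numeral cos_coeff_def)
  moreover have "cos (t + 1/2 * real 4 * pi) / fact 4 * x ^ 4 \<le> x ^ 4 / 24"
    using mult_right_mono[OF cos_le_one, of "x ^ 4" t] by (simp add: fact_numeral)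
  ultimately show ?thesis by simp
qed

lemma cos_ge_quadratic: "1 - x\<^sup>2 / 2 \<le> cos (x::real)"
proof -
  obtain t where "cos x = (\<Sum>m<2. cos_coeff m * x ^ m) + cos (t + 1/2 * real 2 * pi) / fact 2 * x\<^sup>2"
    using Maclaurin_cos_expansion[of x 2] by blast
  moreover have "(\<Sum>m<2. cos_coeff m * x ^ m) = 1"
    by (simp add: lessThan_nat_numeral cos_coeff_def)
  moreover have "- (x\<^sup>2 / 2) \<le> cos (t + 1/2 * real 2 * pi) / fact 2 * x\<^sup>2"
    using mult_right_mono[OF cos_le_one, of "x\<^sup>2" t] by (simp add: fact_numeral)
  ultimately show ?thesis by simp
qed

lemma finite_set_pmf_Pi_pmf:
  fixes q :: "'a \<Rightarrow> 'b::finite pmf"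
  assumes "finite A"
  shows "finite (set_pmf (Pi_pmf A dflt q))"
proof (rule finite_subset)
  show "set_pmf (Pi_pmf A dflt q) \<subseteq> PiE_dflt A dflt (\<lambda>_. UNIV)"
    using set_Pi_pmf_subset[OF assms, of dflt q] by (auto simp: PiE_dflt_def)
qed (use assms in auto)

lemma finite_set_pmf_ber_vec: "finite (set_pmf (ber_vec p n))"
  unfolding ber_vec_def by (intro finite_set_pmf_Pi_pmf) simp

lemma integrable_ber_vec [simp]:
  fixes h :: "(nat \<Rightarrow> bool) \<Rightarrow> 'b::{banach, second_countable_topology}"
  shows "integrable (measure_pmf (ber_vec p n)) h"
  by (rule integrable_measure_pmf_finite[OF finite_set_pmf_ber_vec])

lemma expectation_Pi_pmf_insert_bernoulli:
  fixes h :: "(nat \<Rightarrow> bool) \<Rightarrow> 'b::{banach, second_countable_topology}"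
  assumes "finite A" "j \<notin> A" "0 \<le> p" "p \<le> 1"
  defines "P \<equiv> Pi_pmf A False (\<lambda>_. bernoulli_pmf p)"
  shows "measure_pmf.expectation (Pi_pmf (insert j A) False (\<lambda>_. bernoulli_pmf p)) h =
     p *\<^sub>R measure_pmf.expectation P (\<lambda>f. h (f(j := True)))
     + (1 - p) *\<^sub>R measure_pmf.expectation P (\<lambda>f. h (f(j := False)))"
proof -
  have Pi_pmf_eq: "Pi_pmf (insert j A) False (\<lambda>_. bernoulli_pmf p) =
      bernoulli_pmf p \<bind> (\<lambda>b. map_pmf (\<lambda>f. f(j := b)) P)"
    using assms by (subst Pi_pmf_insert') (simp_all add: map_pmf_def)
  have "finite (set_pmf (map_pmf (\<lambda>f. f(j := b)) P))" for b
    by (simp add: P_def finite_set_pmf_Pi_pmf[OF assms(1)])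
  then have "measure_pmf.expectation (Pi_pmf (insert j A) False (\<lambda>_. bernoulli_pmf p)) h =
      (\<Sum>b\<in>UNIV. pmf (bernoulli_pmf p) b *\<^sub>R measure_pmf.expectation (map_pmf (\<lambda>f. f(j := b)) P) h)"
    unfolding Pi_pmf_eq by (intro pmf_expectation_bind) auto
  then show ?thesis
    using assms by (simp add: UNIV_bool)
qed

(* Condition on the coordinates other than j: at most one value of x_j lands in E, and its
   weight is at most max p (1 - p) = 1 - p. *)
lemma prob_ber_vec_le_flip:
  assumes "j < n" "0 \<le> p" "p \<le> 1/2" "E \<subseteq> F"
    and F_indep: "\<And>x b. x(j := b) \<in> F \<longleftrightarrow> x \<in> F"
    and E_flip: "\<And>x. x \<in> E \<Longrightarrow> x(j := \<not> x j) \<notin> E"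
  shows "measure_pmf.prob (ber_vec p n) E \<le> (1 - p) * measure_pmf.prob (ber_vec p n) F"
proof -
  define A where "A = {..<n} - {j}"
  have A: "finite A" "j \<notin> A" "{..<n} = insert j A"
    using assms(1) by (auto simp: A_def)
  let ?P = "Pi_pmf A False (\<lambda>_. bernoulli_pmf p)"
  have integrable: "integrable (measure_pmf ?P) g" for g :: "(nat \<Rightarrow> bool) \<Rightarrow> real"
    by (intro integrable_measure_pmf_finite finite_set_pmf_Pi_pmf A(1))
  define a where "a = measure_pmf.expectation ?P (\<lambda>f. indicator E (f(j := True)) :: real)"
  define b where "b = measure_pmf.expectation ?P (\<lambda>f. indicator E (f(j := False)) :: real)"
  define c where "c = measure_pmf.expectation ?P (\<lambda>f. indicator F (f(j := False)) :: real)"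
  have prob_split: "measure_pmf.prob (ber_vec p n) X =
      p * measure_pmf.expectation ?P (\<lambda>f. indicator X (f(j := True)))
      + (1 - p) * measure_pmf.expectation ?P (\<lambda>f. indicator X (f(j := False)))" for X
    using expectation_Pi_pmf_insert_bernoulli[OF A(1,2), of p "indicator X :: _ \<Rightarrow> real"] assms(2,3)
    by (simp add: ber_vec_def A(3))
  have "indicator F (f(j := True)) = (indicator F (f(j := False)) :: real)" for f
    using F_indep[of f True] F_indep[of f False] by (simp add: indicator_def)
  then have prob_F: "measure_pmf.prob (ber_vec p n) F = c"
    by (simp add: prob_split c_def algebra_simps)
  have "indicator E (f(j := True)) + indicator E (f(j := False)) \<le> (indicator F (f(j := False)) :: real)" for f
    using E_flip[of "f(j := True)"] \<open>E \<subseteq> F\<close> F_indep[of f True] F_indep[of f False]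
    by (auto simp: indicator_def)
  then have "a + b \<le> c"
    unfolding a_def b_def c_def
    by (subst Bochner_Integration.integral_add[symmetric]) (intro integral_mono integrable)+
  moreover have "a \<ge> 0"
    unfolding a_def by (rule Bochner_Integration.integral_nonneg) simp
  then have "p * a \<le> (1 - p) * a"
    using assms(3) by (intro mult_right_mono) auto
  moreover have "(1 - p) * (a + b) \<le> (1 - p) * c"
    using \<open>a + b \<le> c\<close> assms(3) by (intro mult_left_mono) auto
  ultimately have "p * a + (1 - p) * b \<le> (1 - p) * c"
    using distrib_left[of "1 - p" a b] by linarith
  then show ?thesis
    unfolding prob_split[of E] prob_F a_def b_def .
qed

definition ber_sum :: "(nat \<Rightarrow> real) \<Rightarrow> nat \<Rightarrow> (nat \<Rightarrow> bool) \<Rightarrow> real" where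
  "ber_sum a n x = (\<Sum>j<n. a j * of_bool (x j))"

lemma ber_sum_Suc_fun_upd: "ber_sum a (Suc n) (x(n := b)) = ber_sum a n x + a n * of_bool b"
proof -
  have "(\<Sum>j<n. a j * of_bool ((x(n := b)) j)) = (\<Sum>j<n. a j * of_bool (x j))"
    by (intro sum.cong) auto
  then show ?thesis by (simp add: ber_sum_def)
qed

lemma expectation_cis_ber_sum:
  assumes "0 \<le> p" "p \<le> 1"
  shows "measure_pmf.expectation (ber_vec p n) (\<lambda>x. cis (s * ber_sum a n x)) =
         (\<Prod>j<n. of_real (1 - p) + of_real p * cis (s * a j))"
proof (induction n)
  case 0
  then show ?case by (simp add: ber_vec_def ber_sum_def)
next
  case (Suc n)
  let ?P = "Pi_pmf {..<n} False (\<lambda>_. bernoulli_pmf p)"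
  let ?E = "measure_pmf.expectation ?P (\<lambda>x. cis (s * ber_sum a n x))"
  have cis_upd: "cis (s * ber_sum a (Suc n) (x(n := b))) = cis (s * ber_sum a n x) * cis (s * (a n * of_bool b))" for x b
    by (simp add: ber_sum_Suc_fun_upd cis_mult distrib_left)
  have "measure_pmf.expectation (ber_vec p (Suc n)) (\<lambda>x. cis (s * ber_sum a (Suc n) x)) =
      p *\<^sub>R measure_pmf.expectation ?P (\<lambda>x. cis (s * ber_sum a (Suc n) (x(n := True))))
      + (1 - p) *\<^sub>R measure_pmf.expectation ?P (\<lambda>x. cis (s * ber_sum a (Suc n) (x(n := False))))"
    unfolding ber_vec_def lessThan_Suc
    by (rule expectation_Pi_pmf_insert_bernoulli) (use assms in auto)
  also have "\<dots> = p *\<^sub>R (?E * cis (s * a n)) + (1 - p) *\<^sub>R ?E"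
    by (simp add: cis_upd)
  also have "\<dots> = ?E * (of_real (1 - p) + of_real p * cis (s * a n))"
    by (simp add: scaleR_conv_of_real algebra_simps)
  finally show ?case
    using Suc.IH by (simp add: ber_vec_def)
qed

lemma norm_bernoulli_charfun_le_1:
  assumes "0 \<le> p" "p \<le> 1"
  shows "norm (of_real (1 - p) + of_real p * cis u) \<le> 1"
proof -
  have "norm (of_real (1 - p) + of_real p * cis u) \<le> norm (of_real (1 - p) :: complex) + norm (of_real p * cis u)"
    by (rule norm_triangle_ineq)
  also have "\<dots> = 1"
    using assms by (simp only: norm_mult norm_of_real norm_cis)
  finally show ?thesis .
qed

lemma norm_bernoulli_charfun_le_exp:
  assumes "0 \<le> p" "p \<le> 1/2" "\<bar>u\<bar> \<le> 2"
  shows "norm (of_real (1 - p) + of_real p * cis u) \<le> exp (- (p / 6) * u\<^sup>2)"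
proof -
  let ?z = "of_real (1 - p) + of_real p * cis u"
  have "(norm ?z)\<^sup>2 = (1 - p + p * cos u)\<^sup>2 + (p * sin u)\<^sup>2"
    by (simp add: cmod_power2)
  also have "\<dots> = (1 - p + p * cos u)\<^sup>2 + p\<^sup>2 * (1 - (cos u)\<^sup>2)"
    by (simp add: power_mult_distrib sin_squared_eq)
  also have "\<dots> = 1 - 2 * p * (1 - p) * (1 - cos u)"
    by (simp add: power2_eq_square algebra_simps)
  also have "\<dots> \<le> 1 - p / 3 * u\<^sup>2"
  proof -
    have "u\<^sup>2 \<le> 2\<^sup>2"
      using power_mono[OF assms(3) abs_ge_zero, of 2] by simp
    then have "u ^ 4 \<le> 4 * u\<^sup>2"
      using mult_right_mono[of "u\<^sup>2" 4 "u\<^sup>2"] by (simp add: power4_eq_xxxx power2_eq_square mult.assoc)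
    then have "u\<^sup>2 / 3 \<le> 1 - cos u"
      using cos_le_quartic[of u] by simp
    have "p * (2 * p) \<le> p * 1"
      using assms(1,2) by (intro mult_left_mono) auto
    then have "p \<le> 2 * p * (1 - p)"
      by (simp add: algebra_simps)
    then have "p / 3 * u\<^sup>2 \<le> 2 * p * (1 - p) * (u\<^sup>2 / 3)"
      using mult_right_mono[of p "2 * p * (1 - p)" "u\<^sup>2 / 3"] by simp
    also have "\<dots> \<le> 2 * p * (1 - p) * (1 - cos u)"
      using \<open>u\<^sup>2 / 3 \<le> 1 - cos u\<close> assms(1,2) by (intro mult_left_mono) auto
    finally have "p / 3 * u\<^sup>2 \<le> 2 * p * (1 - p) * (1 - cos u)" .
    then show ?thesis by simp
  qed
  also have "\<dots> \<le> exp (- (p / 3) * u\<^sup>2)"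
    using exp_ge_add_one_self[of "- (p / 3) * u\<^sup>2"] by simp
  also have "\<dots> = (exp (- (p / 6) * u\<^sup>2))\<^sup>2"
    by (simp flip: exp_double)
  finally show ?thesis
    by (rule power2_le_imp_le) simp
qed

lemma norm_expectation_cis_ber_sum_le_1:
  assumes "0 \<le> p" "p \<le> 1"
  shows "norm (measure_pmf.expectation (ber_vec p n) (\<lambda>x. cis (c * ber_sum a n x))) \<le> 1"
  unfolding expectation_cis_ber_sum[OF assms] prod_norm[symmetric]
  by (intro prod_le_1 conjI norm_ge_zero norm_bernoulli_charfun_le_1 assms)

lemma norm_expectation_cis_ber_sum_le_exp:
  assumes "0 \<le> p" "p \<le> 1/2" "(\<Sum>j<n. (a j)\<^sup>2) = 1" "\<And>j. j < n \<Longrightarrow> \<bar>c * a j\<bar> \<le> 2"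
  shows "norm (measure_pmf.expectation (ber_vec p n) (\<lambda>x. cis (c * ber_sum a n x)))
    \<le> exp (- (p / 6) * c\<^sup>2)"
proof -
  have "norm (measure_pmf.expectation (ber_vec p n) (\<lambda>x. cis (c * ber_sum a n x))) =
      (\<Prod>j<n. norm (of_real (1 - p) + of_real p * cis (c * a j)))"
    using assms(1,2) by (simp add: expectation_cis_ber_sum prod_norm)
  also have "\<dots> \<le> (\<Prod>j<n. exp (- (p / 6) * (c * a j)\<^sup>2))"
    using assms by (intro prod_mono conjI norm_ge_zero norm_bernoulli_charfun_le_exp) auto
  also have "\<dots> = exp (- (p / 6) * c\<^sup>2 * (\<Sum>j<n. (a j)\<^sup>2))"
    by (simp add: exp_sum sum_distrib_left power_mult_distrib mult.assoc)
  finally show ?thesis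
    using assms(3) by simp
qed

lemma expectation_cos_le_norm_expectation_cis:
  fixes M :: "'a pmf" and S :: "'a \<Rightarrow> real"
  assumes "finite (set_pmf M)"
  shows "measure_pmf.expectation M (\<lambda>x. cos (c * (S x - t))) \<le>
         norm (measure_pmf.expectation M (\<lambda>x. cis (c * S x)))"
proof -
  let ?f = "\<lambda>x. cis (- (c * t)) * cis (c * S x)"
  have "cos (c * (S x - t)) = Re (?f x)" for x
    by (simp add: cis_mult algebra_simps)
  then have "measure_pmf.expectation M (\<lambda>x. cos (c * (S x - t))) = measure_pmf.expectation M (\<lambda>x. Re (?f x))"
    by presburger
  also have "\<dots> = Re (measure_pmf.expectation M ?f)"
    by (intro has_bochner_integral_integral_eq has_bochner_integral_Re has_bochner_integral_integrable
        integrable_measure_pmf_finite assms)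
  also have "\<dots> = Re (cis (- (c * t)) * measure_pmf.expectation M (\<lambda>x. cis (c * S x)))"
    by simp
  also have "\<dots> \<le> norm (cis (- (c * t)) * measure_pmf.expectation M (\<lambda>x. cis (c * S x)))"
    by (rule complex_Re_le_cmod)
  also have "\<dots> = norm (measure_pmf.expectation M (\<lambda>x. cis (c * S x)))"
    by (simp add: norm_mult)
  finally show ?thesis .
qed

lemma indicator_le_cos_double_sum:
  fixes y \<theta> :: real
  assumes "\<theta> > 0" "L \<ge> 1"
  defines "\<omega> \<equiv> 1 / (real L * \<theta>)"
  shows "of_bool (\<bar>y\<bar> \<le> \<theta>) \<le> 4 / (real L)\<^sup>2 * (\<Sum>l<L. \<Sum>l'<L. cos ((real l - real l') * \<omega> * y))"
proof -
  let ?C = "\<Sum>l<L. cos (real l * \<omega> * y)" and ?S = "\<Sum>l<L. sin (real l * \<omega> * y)"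
  have "cos ((real l - real l') * \<omega> * y) =
      cos (real l * \<omega> * y) * cos (real l' * \<omega> * y) + sin (real l * \<omega> * y) * sin (real l' * \<omega> * y)" for l l'
    using cos_diff[of "real l * \<omega> * y" "real l' * \<omega> * y"] by (simp add: algebra_simps)
  \<comment> \<open>the double sum is the squared modulus of the sum of the exp (i l \<omega> y)\<close>
  then have double_sum: "(\<Sum>l<L. \<Sum>l'<L. cos ((real l - real l') * \<omega> * y)) = ?C\<^sup>2 + ?S\<^sup>2"
    by (simp add: power2_eq_square sum_product sum.distrib)
  show ?thesis
  proof (cases "\<bar>y\<bar> \<le> \<theta>")
    case False
    then show ?thesis
      using double_sum by simp
  next
    case True
    have "1/2 \<le> cos (real l * \<omega> * y)" if "l < L" for l
    proof -
      have "real l * \<bar>y\<bar> \<le> real L * \<theta>"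
        using that True by (intro mult_mono) auto
      then have "\<bar>real l * \<omega> * y\<bar> \<le> 1"
        using assms(1,2) by (simp add: \<omega>_def abs_mult field_simps)
      then have "(real l * \<omega> * y)\<^sup>2 \<le> 1"
        using power_mono[of _ 1 2] by fastforce
      then show ?thesis
        using cos_ge_quadratic[of "real l * \<omega> * y"] by simp
    qed
    then have "real L / 2 \<le> ?C"
      using sum_mono[of "{..<L}" "\<lambda>_. 1/2" "\<lambda>l. cos (real l * \<omega> * y)"] by simp
    then have "(real L / 2)\<^sup>2 \<le> ?C\<^sup>2 + ?S\<^sup>2"
      using power_mono[of "real L / 2" ?C 2] by (simp add: add_increasing2)
    then show ?thesis
      unfolding double_sum using True assms(2) by (simp add: field_simps)
  qed
qed

lemma expectation_cos_ber_sum_le: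
  assumes p: "0 < p" "p \<le> 1/2" and "\<theta> > 0" "l < L" "l' < L"
    and unit: "(\<Sum>j<n. (a j)\<^sup>2) = 1" and spread: "\<And>j. j < n \<Longrightarrow> \<bar>a j\<bar> \<le> 2 * \<theta>"
  defines "\<omega> \<equiv> 1 / (real L * \<theta>)"
  shows "measure_pmf.expectation (ber_vec p n) (\<lambda>x. cos ((real l - real l') * \<omega> * (ber_sum a n x - t)))
     \<le> of_bool (l = l') + exp (- (p / 6) * \<omega>\<^sup>2)"
proof -
  define c where "c = (real l - real l') * \<omega>"
  let ?\<phi> = "measure_pmf.expectation (ber_vec p n) (\<lambda>x. cis (c * ber_sum a n x))"
  have "measure_pmf.expectation (ber_vec p n) (\<lambda>x. cos ((real l - real l') * \<omega> * (ber_sum a n x - t)))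
      \<le> norm ?\<phi>"
    unfolding c_def by (rule expectation_cos_le_norm_expectation_cis[OF finite_set_pmf_ber_vec])
  also have "\<dots> \<le> of_bool (l = l') + exp (- (p / 6) * \<omega>\<^sup>2)"
  proof (cases "l = l'")
    case True
    then show ?thesis
      using norm_expectation_cis_ber_sum_le_1[of p n c a] p by (simp add: add_increasing2)
  next
    case False
    have "\<bar>c * a j\<bar> \<le> 2" if "j < n" for j
    proof -
      have "\<bar>c * a j\<bar> \<le> (real L - 1) * \<omega> * (2 * \<theta>)"
        unfolding c_def abs_mult using assms(3-5) spread[OF that]
        by (intro mult_mono) (auto simp: \<omega>_def)
      also have "\<dots> \<le> 2"
        using assms(3,4) by (simp add: \<omega>_def field_simps)
      finally show ?thesis .
    qed
    then have "norm ?\<phi> \<le> exp (- (p / 6) * c\<^sup>2)"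
      using p unit by (intro norm_expectation_cis_ber_sum_le_exp) auto
    also have "\<dots> \<le> exp (- (p / 6) * \<omega>\<^sup>2)"
    proof -
      have "1 \<le> \<bar>real l - real l'\<bar>"
        using False by linarith
      then have "1 \<le> (real l - real l')\<^sup>2"
        using power_mono[of 1 "\<bar>real l - real l'\<bar>" 2] by simp
      then have "\<omega>\<^sup>2 \<le> c\<^sup>2"
        unfolding c_def power_mult_distrib using mult_right_mono[of 1 _ "\<omega>\<^sup>2"] by simp
      then show ?thesis
        using mult_left_mono[of "\<omega>\<^sup>2" "c\<^sup>2" "p / 6"] p by simp
    qed
    finally show ?thesis
      using False by simp
  qed
  finally show ?thesis .
qed

lemma prob_ber_sum_small_ball_le:
  assumes p: "0 < p" "p \<le> 1/2" and "\<theta> > 0" "L \<ge> 1"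
    and unit: "(\<Sum>j<n. (a j)\<^sup>2) = 1" and spread: "\<And>j. j < n \<Longrightarrow> \<bar>a j\<bar> \<le> 2 * \<theta>"
  shows "measure_pmf.prob (ber_vec p n) {x. \<bar>ber_sum a n x - t\<bar> \<le> \<theta>}
     \<le> 4 / real L + 4 * exp (- (p / 6) * (1 / (real L * \<theta>))\<^sup>2)"
proof -
  define \<omega> where "\<omega> = 1 / (real L * \<theta>)"
  define e where "e = exp (- (p / 6) * \<omega>\<^sup>2)"
  let ?B = "ber_vec p n"
  let ?cos = "\<lambda>l l' x. cos ((real l - real l') * \<omega> * (ber_sum a n x - t))"
  have "measure_pmf.prob ?B {x. \<bar>ber_sum a n x - t\<bar> \<le> \<theta>} =
      measure_pmf.expectation ?B (indicator {x. \<bar>ber_sum a n x - t\<bar> \<le> \<theta>})"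
    by simp
  also have "\<dots> = measure_pmf.expectation ?B (\<lambda>x. of_bool (\<bar>ber_sum a n x - t\<bar> \<le> \<theta>))"
    unfolding indicator_def by simp
  also have "\<dots> \<le> measure_pmf.expectation ?B (\<lambda>x. 4 / (real L)\<^sup>2 * (\<Sum>l<L. \<Sum>l'<L. ?cos l l' x))"
    using indicator_le_cos_double_sum[OF assms(3,4)] by (intro integral_mono integrable_ber_vec) (simp add: \<omega>_def)
  also have "\<dots> = 4 / (real L)\<^sup>2 * (\<Sum>l<L. \<Sum>l'<L. measure_pmf.expectation ?B (?cos l l'))"
    by (simp add: Bochner_Integration.integral_sum)
  also have "\<dots> \<le> 4 / (real L)\<^sup>2 * (\<Sum>l<L. \<Sum>l'<L. of_bool (l = l') + e)"
    using expectation_cos_ber_sum_le[OF p assms(3) _ _ unit spread]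
    by (intro mult_left_mono sum_mono) (auto simp: \<omega>_def e_def)
  also have "\<dots> = 4 / real L + 4 * e"
    using assms(4) by (simp add: sum.distrib power2_eq_square field_simps)
  finally show ?thesis
    by (simp add: e_def \<omega>_def)
qed

definition spread_small_ball_bound :: "real \<Rightarrow> real \<Rightarrow> real \<Rightarrow> bool" where
  "spread_small_ball_bound p \<theta> \<epsilon> \<longleftrightarrow>
     (\<forall>n a t. (\<Sum>j<n. (a j)\<^sup>2) = 1 \<longrightarrow> (\<forall>j<n. \<bar>a j\<bar> \<le> 2 * \<theta>) \<longrightarrow>
        measure_pmf.prob (ber_vec p n) {x. \<bar>ber_sum a n x - t\<bar> \<le> \<theta>} \<le> \<epsilon>)"

lemma exists_spread_small_ball_bound:
  assumes p: "0 < p" "p \<le> 1/2" and "\<epsilon> > 0"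
  shows "\<exists>\<theta>>0. spread_small_ball_bound p \<theta> \<epsilon>"
proof -
  define L where "L = nat \<lceil>8 / \<epsilon>\<rceil> + 1"
  define \<theta> where "\<theta> = sqrt (\<epsilon> * p / 48) / real L"
  have "L \<ge> 1" "real L \<ge> 8 / \<epsilon>"
    unfolding L_def by linarith+
  have "\<theta> > 0"
    using assms \<open>L \<ge> 1\<close> by (simp add: \<theta>_def)
  have "4 / real L \<le> \<epsilon> / 2"
    using \<open>real L \<ge> 8 / \<epsilon>\<close> \<open>L \<ge> 1\<close> assms(3) by (simp add: field_simps)
  have "(1 / (real L * \<theta>))\<^sup>2 = 48 / (\<epsilon> * p)"
    using assms \<open>L \<ge> 1\<close> by (simp add: \<theta>_def power_divide power_mult_distrib)
  then have "4 * exp (- (p / 6) * (1 / (real L * \<theta>))\<^sup>2) = 4 / exp (8 / \<epsilon>)"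
    using assms by (simp add: exp_minus field_simps)
  also have "\<dots> \<le> \<epsilon> / 2"
    using exp_ge_add_one_self[of "8 / \<epsilon>"] assms(3) by (simp add: field_simps)
  finally have exp_term: "4 * exp (- (p / 6) * (1 / (real L * \<theta>))\<^sup>2) \<le> \<epsilon> / 2" .
  have "spread_small_ball_bound p \<theta> \<epsilon>"
    unfolding spread_small_ball_bound_def
  proof (intro allI impI)
    fix n :: nat and a :: "nat \<Rightarrow> real" and t :: real
    assume "(\<Sum>j<n. (a j)\<^sup>2) = 1" "\<forall>j<n. \<bar>a j\<bar> \<le> 2 * \<theta>"
    then have "measure_pmf.prob (ber_vec p n) {x. \<bar>ber_sum a n x - t\<bar> \<le> \<theta>}
        \<le> 4 / real L + 4 * exp (- (p / 6) * (1 / (real L * \<theta>))\<^sup>2)"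
      by (intro prob_ber_sum_small_ball_le[OF p \<open>\<theta> > 0\<close> \<open>L \<ge> 1\<close>]) auto
    then show "measure_pmf.prob (ber_vec p n) {x. \<bar>ber_sum a n x - t\<bar> \<le> \<theta>} \<le> \<epsilon>"
      using \<open>4 / real L \<le> \<epsilon> / 2\<close> exp_term by linarith
  qed
  with \<open>\<theta> > 0\<close> show ?thesis by blast
qed

lemma dist_N_eq_L2_set: "dist_N R v w = L2_set (\<lambda>i. v i - w i) {..<R}"
  by (simp add: dist_N_def L2_set_def)

lemma dist_N_commute: "dist_N R v w = dist_N R w v"
  by (simp add: dist_N_def power2_commute)

lemma dist_N_triangle: "dist_N R v w \<le> dist_N R v z + dist_N R z w"
  using L2_set_triangle_ineq[of "\<lambda>i. v i - z i" "\<lambda>i. z i - w i" "{..<R}"]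
  by (simp add: dist_N_eq_L2_set)

lemma abs_le_dist_N:
  assumes "i < R"
  shows "\<bar>v i - w i\<bar> \<le> dist_N R v w"
proof -
  have "(v i - w i)\<^sup>2 \<le> (\<Sum>i<R. (v i - w i)\<^sup>2)"
    using assms by (intro member_le_sum) auto
  then show ?thesis
    unfolding dist_N_def using real_sqrt_le_mono by fastforce
qed

lemma sum_mult_of_bool_eq_lessThan:
  fixes f :: "nat \<Rightarrow> real"
  assumes "i < K"
  shows "(\<Sum>m<K. f m * of_bool (i = m)) = f i"
  using assms by (simp add: of_bool_def if_distrib sum.delta' cong: if_cong)

lemma orthonormal_rows_mono:
  "orthonormal_rows R n M \<Longrightarrow> r \<le> R \<Longrightarrow> orthonormal_rows r n M"
  by (simp add: orthonormal_rows_def)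

lemma sum_lincomb_orthonormal_rows:
  assumes "orthonormal_rows K n X"
  shows "(\<Sum>l<n. (\<Sum>m<K. a m * X m l) * (\<Sum>m'<K. b m' * X m' l)) = (\<Sum>m<K. a m * b m)"
proof -
  have "(\<Sum>l<n. (\<Sum>m<K. a m * X m l) * (\<Sum>m'<K. b m' * X m' l)) =
      (\<Sum>l<n. \<Sum>m<K. \<Sum>m'<K. a m * b m' * (X m l * X m' l))"
    by (simp add: sum_product algebra_simps)
  also have "\<dots> = (\<Sum>m<K. \<Sum>m'<K. \<Sum>l<n. a m * b m' * (X m l * X m' l))"
    by (subst sum.swap) (simp add: sum.swap[of _ "{..<n}"])
  also have "\<dots> = (\<Sum>m<K. \<Sum>m'<K. a m * b m' * (\<Sum>l<n. X m l * X m' l))"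
    by (simp add: sum_distrib_left)
  also have "\<dots> = (\<Sum>m<K. \<Sum>m'<K. a m * b m' * of_bool (m = m'))"
    using assms by (intro sum.cong refl) (simp add: orthonormal_rows_def)
  also have "\<dots> = (\<Sum>m<K. a m * b m)"
    by (intro sum.cong refl) (simp add: sum_mult_of_bool_eq_lessThan)
  finally show ?thesis .
qed

definition mat_mult ::
    "nat \<Rightarrow> (nat \<Rightarrow> nat \<Rightarrow> real) \<Rightarrow> (nat \<Rightarrow> nat \<Rightarrow> real) \<Rightarrow> nat \<Rightarrow> nat \<Rightarrow> real" where
  "mat_mult K A B i l = (\<Sum>m<K. A i m * B m l)"

lemma orthonormal_rows_mat_mult:
  assumes "orthonormal_rows r K A" "orthonormal_rows K n B"
  shows "orthonormal_rows r n (mat_mult K A B)"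
  unfolding orthonormal_rows_def mat_mult_def
  using sum_lincomb_orthonormal_rows[OF assms(2)] assms(1) by (simp add: orthonormal_rows_def)

lemma mat_image_mat_mult:
  assumes "i < r"
  shows "mat_image r n (mat_mult K A B) x i = (\<Sum>m<K. A i m * mat_image K n B x m)"
proof -
  have "mat_image r n (mat_mult K A B) x i = (\<Sum>l<n. \<Sum>m<K. A i m * (B m l * of_bool (x l)))"
    using assms by (simp add: mat_image_def mat_mult_def sum_distrib_right mult.assoc del: sum_mult_of_bool_eq)
  also have "\<dots> = (\<Sum>m<K. \<Sum>l<n. A i m * (B m l * of_bool (x l)))"
    by (rule sum.swap)
  also have "\<dots> = (\<Sum>m<K. A i m * mat_image K n B x m)"
    by (simp add: mat_image_def sum_distrib_left del: sum_mult_of_bool_eq)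
  finally show ?thesis .
qed

lemma dist_N_lincomb_le:
  assumes "orthonormal_rows K R (\<lambda>m i. Q i m)" "r \<le> R"
  shows "dist_N r (\<lambda>i. \<Sum>m<K. Q i m * v m) (\<lambda>i. \<Sum>m<K. Q i m * w m) \<le> dist_N K v w"
proof -
  have "(\<Sum>i<r. ((\<Sum>m<K. Q i m * v m) - (\<Sum>m<K. Q i m * w m))\<^sup>2) =
      (\<Sum>i<r. (\<Sum>m<K. (v m - w m) * Q i m)\<^sup>2)"
    by (simp add: sum_subtractf algebra_simps)
  also have "\<dots> \<le> (\<Sum>i<R. (\<Sum>m<K. (v m - w m) * Q i m)\<^sup>2)"
    using assms(2) by (intro sum_mono2) auto
  also have "\<dots> = (\<Sum>m<K. (v m - w m)\<^sup>2)"
    using sum_lincomb_orthonormal_rows[OF assms(1), of "\<lambda>m. v m - w m" "\<lambda>m. v m - w m"]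
    by (simp add: power2_eq_square)
  finally show ?thesis
    unfolding dist_N_def by (rule real_sqrt_le_mono)
qed

(* For w = 0 the division by S = 0 turns this into the identity matrix. *)
lemma orthonormal_rows_reflection:
  fixes w :: "nat \<Rightarrow> real" and R :: nat
  defines "S \<equiv> \<Sum>m<R. (w m)\<^sup>2"
  shows "orthonormal_rows R R (\<lambda>i m. of_bool (i = m) - 2 * w i * w m / S)"
  unfolding orthonormal_rows_def
proof (intro allI impI)
  fix i i' assume "i < R" "i' < R"
  note delta = sum_mult_of_bool_eq_lessThan
  have "(\<Sum>m<R. (of_bool (i = m) - 2 * w i * w m / S) * (of_bool (i' = m) - 2 * w i' * w m / S))
      = (\<Sum>m<R. of_bool (i' = m) * of_bool (i = m))
        - 2 * w i' / S * (\<Sum>m<R. w m * of_bool (i = m)) - 2 * w i / S * (\<Sum>m<R. w m * of_bool (i' = m))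
        + 4 * w i * w i' / S\<^sup>2 * (\<Sum>m<R. (w m)\<^sup>2)"
    by (simp add: power2_eq_square algebra_simps sum_subtractf sum.distrib sum_distrib_left
        sum_divide_distrib del: sum_mult_of_bool_eq sum_of_bool_mult_eq)
  also have "\<dots> = of_bool (i' = i) - 2 * w i' / S * w i - 2 * w i / S * w i' + 4 * w i * w i' / S\<^sup>2 * S"
    unfolding S_def[symmetric] using delta[OF \<open>i < R\<close>] delta[OF \<open>i' < R\<close>]
    by (simp del: sum_mult_of_bool_eq sum_of_bool_mult_eq)
  also have "\<dots> = of_bool (i = i')"
    by (cases "S = 0") (auto simp: power2_eq_square)
  finally show "(\<Sum>m<R. (of_bool (i = m) - 2 * w i * w m / S) * (of_bool (i' = m) - 2 * w i' * w m / S))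
      = (if i = i' then 1 else 0)"
    by simp
qed

lemma householder_reflection:
  fixes v :: "nat \<Rightarrow> real"
  assumes "r < R"
  obtains Q where "orthonormal_rows R R Q" "\<And>i m. Q i m = Q m i"
    "\<And>i. i < R \<Longrightarrow> i \<noteq> r \<Longrightarrow> (\<Sum>m<R. Q i m * v m) = 0"
proof -
  define \<nu> where "\<nu> = sqrt (\<Sum>m<R. (v m)\<^sup>2)"
  define w where "w m = v m - \<nu> * of_bool (r = m)" for m
  define S where "S = (\<Sum>m<R. (w m)\<^sup>2)"
  \<comment> \<open>the reflection in the hyperplane orthogonal to w = v - |v| e_r\<close>
  define Q where "Q i m = of_bool (i = m) - 2 * w i * w m / S" for i m
  note delta = sum_mult_of_bool_eq_lessThan
  have "(\<Sum>m<R. w m * v m) = (\<Sum>m<R. (v m)\<^sup>2) - \<nu> * (\<Sum>m<R. v m * of_bool (r = m))"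
    by (simp add: w_def power2_eq_square algebra_simps sum_subtractf sum_distrib_left
        del: sum_mult_of_bool_eq sum_of_bool_mult_eq)
  moreover have "S = (\<Sum>m<R. (v m)\<^sup>2) - 2 * \<nu> * (\<Sum>m<R. v m * of_bool (r = m))
      + \<nu>\<^sup>2 * (\<Sum>m<R. of_bool (r = m))"
    by (simp add: S_def w_def power2_eq_square algebra_simps sum_subtractf sum.distrib sum_distrib_left
        flip: of_bool_conj del: sum_mult_of_bool_eq sum_of_bool_mult_eq sum_of_bool_eq)
  moreover have "\<nu>\<^sup>2 = (\<Sum>m<R. (v m)\<^sup>2)"
    by (simp add: \<nu>_def sum_nonneg)
  ultimately have wv: "(\<Sum>m<R. w m * v m) = S / 2"
    using delta[OF assms, of v] delta[OF assms, of "\<lambda>_. 1"] by simp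
  show ?thesis
  proof
    show "orthonormal_rows R R Q"
      unfolding Q_def S_def by (rule orthonormal_rows_reflection)
  next
    show "Q i m = Q m i" for i m
      unfolding Q_def by (cases "i = m") (simp_all add: mult.commute)
  next
    fix i assume "i < R" "i \<noteq> r"
    have "(\<Sum>m<R. Q i m * v m) = (\<Sum>m<R. v m * of_bool (i = m)) - 2 * w i / S * (\<Sum>m<R. w m * v m)"
      by (simp add: Q_def algebra_simps sum_subtractf sum_distrib_left sum_divide_distrib
          del: sum_mult_of_bool_eq sum_of_bool_mult_eq)
    also have "\<dots> = v i - w i * (S / S)"
      using delta[OF \<open>i < R\<close>, of v] by (simp add: wv)
    also have "\<dots> = v i - w i"
    proof (cases "S = 0")
      case True
      then have "w i = 0"
        using sum_nonneg_eq_0_iff[of "{..<R}" "\<lambda>m. (w m)\<^sup>2"] \<open>i < R\<close> by (simp add: S_def)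
      then show ?thesis by simp
    qed simp
    also have "\<dots> = 0"
      using \<open>i \<noteq> r\<close> by (simp add: w_def)
    finally show "(\<Sum>m<R. Q i m * v m) = 0" .
  qed
qed

lemma orthonormal_rows_eliminate_column:
  assumes "orthonormal_rows (Suc r) n N"
  obtains N' f where "orthonormal_rows r n N'" "\<And>i. i < r \<Longrightarrow> N' i j = 0"
    "\<And>x z. dist_N r (mat_image r n N' x) (f z) \<le> dist_N (Suc r) (mat_image (Suc r) n N x) z"
proof -
  obtain Q where Q: "orthonormal_rows (Suc r) (Suc r) Q" "\<And>i m. Q i m = Q m i"
    "\<And>i. i < Suc r \<Longrightarrow> i \<noteq> r \<Longrightarrow> (\<Sum>m<Suc r. Q i m * N m j) = 0"
    using householder_reflection[of r "Suc r" "\<lambda>m. N m j"] by blast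
  have "(\<lambda>m i. Q i m) = Q"
    by (intro ext) (rule Q(2))
  then have Q_columns: "orthonormal_rows (Suc r) (Suc r) (\<lambda>m i. Q i m)"
    using Q(1) by simp
  define N' where "N' = mat_mult (Suc r) Q N"
  show ?thesis
  proof (rule that[of N' "\<lambda>z i. \<Sum>m<Suc r. Q i m * z m"])
    show "orthonormal_rows r n N'"
      unfolding N'_def by (rule orthonormal_rows_mat_mult[OF orthonormal_rows_mono[OF Q(1)] assms]) simp
  next
    show "N' i j = 0" if "i < r" for i
      using Q(3)[of i] that by (simp add: N'_def mat_mult_def)
  next
    fix x z
    have "dist_N r (mat_image r n N' x) (\<lambda>i. \<Sum>m<Suc r. Q i m * z m) =
        dist_N r (\<lambda>i. \<Sum>m<Suc r. Q i m * mat_image (Suc r) n N x m) (\<lambda>i. \<Sum>m<Suc r. Q i m * z m)"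
      unfolding dist_N_def N'_def by (simp add: mat_image_mat_mult)
    also have "\<dots> \<le> dist_N (Suc r) (mat_image (Suc r) n N x) z"
      by (rule dist_N_lincomb_le[OF Q_columns]) simp
    finally show "dist_N r (mat_image r n N' x) (\<lambda>i. \<Sum>m<Suc r. Q i m * z m)
        \<le> dist_N (Suc r) (mat_image (Suc r) n N x) z" .
  qed
qed

lemma mat_image_fun_upd:
  assumes "\<And>i. i < R \<Longrightarrow> M i j = 0"
  shows "mat_image R n M (x(j := b)) = mat_image R n M x"
proof
  fix i
  have "(\<Sum>l<n. M i l * of_bool ((x(j := b)) l)) = (\<Sum>l<n. M i l * of_bool (x l))" if "i < R"
    using assms[OF that] by (intro sum.cong) auto
  then show "mat_image R n M (x(j := b)) i = mat_image R n M x i"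
    by (simp add: mat_image_def del: sum_mult_of_bool_eq)
qed

lemma dist_N_mat_image_flip:
  assumes "j < n"
  shows "dist_N R (mat_image R n M x) (mat_image R n M (x(j := \<not> x j))) = sqrt (\<Sum>i<R. (M i j)\<^sup>2)"
proof -
  have "mat_image R n M x i - mat_image R n M (x(j := \<not> x j)) i = M i j * (of_bool (x j) - of_bool (\<not> x j))"
    if "i < R" for i
  proof -
    have "mat_image R n M x i - mat_image R n M (x(j := \<not> x j)) i =
        (\<Sum>l<n. M i l * (of_bool (x l) - of_bool ((x(j := \<not> x j)) l)))"
      using that by (simp add: mat_image_def sum_subtractf right_diff_distrib del: sum_mult_of_bool_eq)
    also have "\<dots> = (\<Sum>l<n. if l = j then M i j * (of_bool (x j) - of_bool (\<not> x j)) else 0)"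
      by (intro sum.cong) auto
    finally show ?thesis
      using assms by simp
  qed
  moreover have "(of_bool (x j) - of_bool (\<not> x j) :: real)\<^sup>2 = 1"
    by simp
  ultimately show ?thesis
    unfolding dist_N_def by (simp add: power_mult_distrib)
qed

lemma prob_small_ball_le_of_large_column:
  assumes "0 \<le> p" "p \<le> 1/2" "orthonormal_rows (Suc r) n N" "j < n"
    and large: "2 * \<theta> < sqrt (\<Sum>i<Suc r. (N i j)\<^sup>2)"
  obtains N' z' where "orthonormal_rows r n N'"
    "measure_pmf.prob (ber_vec p n) {x. dist_N (Suc r) (mat_image (Suc r) n N x) z \<le> \<theta>}
       \<le> (1 - p) * measure_pmf.prob (ber_vec p n) {x. dist_N r (mat_image r n N' x) z' \<le> \<theta>}"
proof -
  obtain N' f where N': "orthonormal_rows r n N'" "\<And>i. i < r \<Longrightarrow> N' i j = 0"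
    and contraction: "\<And>x z. dist_N r (mat_image r n N' x) (f z) \<le> dist_N (Suc r) (mat_image (Suc r) n N x) z"
    using orthonormal_rows_eliminate_column[OF assms(3)] by blast
  let ?E = "{x. dist_N (Suc r) (mat_image (Suc r) n N x) z \<le> \<theta>}"
  let ?F = "{x. dist_N r (mat_image r n N' x) (f z) \<le> \<theta>}"
  have "measure_pmf.prob (ber_vec p n) ?E \<le> (1 - p) * measure_pmf.prob (ber_vec p n) ?F"
  proof (rule prob_ber_vec_le_flip[OF assms(4,1,2)])
    show "?E \<subseteq> ?F"
      using contraction order_trans by blast
    show "x(j := b) \<in> ?F \<longleftrightarrow> x \<in> ?F" for x b
      using mat_image_fun_upd[of r N' j] N'(2) by simp
    show "x(j := \<not> x j) \<notin> ?E" if "x \<in> ?E" for x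
    proof
      assume "x(j := \<not> x j) \<in> ?E"
      let ?a = "mat_image (Suc r) n N x" and ?b = "mat_image (Suc r) n N (x(j := \<not> x j))"
      have "dist_N (Suc r) ?a ?b \<le> dist_N (Suc r) ?a z + dist_N (Suc r) ?b z"
        using dist_N_triangle[of "Suc r" ?a ?b z] dist_N_commute[of "Suc r" z ?b] by simp
      also have "\<dots> \<le> 2 * \<theta>"
        using that \<open>x(j := \<not> x j) \<in> ?E\<close> by simp
      finally show False
        using large dist_N_mat_image_flip[OF assms(4)] by simp
    qed
  qed
  then show ?thesis
    using that N'(1) by blast
qed

lemma prob_small_ball_le_of_small_columns:
  assumes "spread_small_ball_bound p \<theta> \<epsilon>" "orthonormal_rows (Suc r) n N"
    and small: "\<And>j. j < n \<Longrightarrow> sqrt (\<Sum>i<Suc r. (N i j)\<^sup>2) \<le> 2 * \<theta>"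
  shows "measure_pmf.prob (ber_vec p n) {x. dist_N (Suc r) (mat_image (Suc r) n N x) z \<le> \<theta>} \<le> \<epsilon>"
proof -
  have "(\<Sum>j<n. (N 0 j)\<^sup>2) = 1"
    using assms(2) by (simp add: orthonormal_rows_def power2_eq_square)
  moreover have "\<bar>N 0 j\<bar> \<le> 2 * \<theta>" if "j < n" for j
    using abs_le_dist_N[of 0 "Suc r" "\<lambda>i. N i j" "\<lambda>_. 0"] small[OF that] by (simp add: dist_N_def)
  ultimately have row_0: "measure_pmf.prob (ber_vec p n) {x. \<bar>ber_sum (N 0) n x - z 0\<bar> \<le> \<theta>} \<le> \<epsilon>"
    using assms(1) by (simp add: spread_small_ball_bound_def)
  have "\<bar>ber_sum (N 0) n x - z 0\<bar> \<le> dist_N (Suc r) (mat_image (Suc r) n N x) z" for x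
    using abs_le_dist_N[of 0 "Suc r" "mat_image (Suc r) n N x" z] by (simp add: mat_image_def ber_sum_def)
  then have "{x. dist_N (Suc r) (mat_image (Suc r) n N x) z \<le> \<theta>}
      \<subseteq> {x. \<bar>ber_sum (N 0) n x - z 0\<bar> \<le> \<theta>}"
    by (auto intro: order_trans)
  then have "measure_pmf.prob (ber_vec p n) {x. dist_N (Suc r) (mat_image (Suc r) n N x) z \<le> \<theta>}
      \<le> measure_pmf.prob (ber_vec p n) {x. \<bar>ber_sum (N 0) n x - z 0\<bar> \<le> \<theta>}"
    by (rule measure_pmf.finite_measure_mono) simp
  with row_0 show ?thesis
    by linarith
qed

lemma prob_small_ball_le_pow:
  assumes "0 < p" "p \<le> 1/2" "spread_small_ball_bound p \<theta> ((1 - p) ^ k)"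
  shows "r \<le> k \<Longrightarrow> orthonormal_rows r n N \<Longrightarrow>
    measure_pmf.prob (ber_vec p n) {x. dist_N r (mat_image r n N x) z \<le> \<theta>} \<le> (1 - p) ^ r"
proof (induction r arbitrary: N z)
  case 0
  then show ?case by simp
next
  case (Suc r)
  show ?case
  proof (cases "\<exists>j<n. 2 * \<theta> < sqrt (\<Sum>i<Suc r. (N i j)\<^sup>2)")
    case True
    then obtain j where "j < n" "2 * \<theta> < sqrt (\<Sum>i<Suc r. (N i j)\<^sup>2)"
      by blast
    then obtain N' z' where "orthonormal_rows r n N'" and reduce:
      "measure_pmf.prob (ber_vec p n) {x. dist_N (Suc r) (mat_image (Suc r) n N x) z \<le> \<theta>}
         \<le> (1 - p) * measure_pmf.prob (ber_vec p n) {x. dist_N r (mat_image r n N' x) z' \<le> \<theta>}"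
      using prob_small_ball_le_of_large_column[of p r n N j \<theta> z] assms(1,2) Suc.prems(2) by auto
    have "measure_pmf.prob (ber_vec p n) {x. dist_N r (mat_image r n N' x) z' \<le> \<theta>} \<le> (1 - p) ^ r"
      using Suc.IH Suc.prems(1) \<open>orthonormal_rows r n N'\<close> by simp
    then have "(1 - p) * measure_pmf.prob (ber_vec p n) {x. dist_N r (mat_image r n N' x) z' \<le> \<theta>}
        \<le> (1 - p) * (1 - p) ^ r"
      using assms(2) by (intro mult_left_mono) auto
    with reduce have "measure_pmf.prob (ber_vec p n) {x. dist_N (Suc r) (mat_image (Suc r) n N x) z \<le> \<theta>}
        \<le> (1 - p) * (1 - p) ^ r"
      by (rule order_trans)
    then show ?thesis
      by simp
  next
    case False
    have "measure_pmf.prob (ber_vec p n) {x. dist_N (Suc r) (mat_image (Suc r) n N x) z \<le> \<theta>} \<le> (1 - p) ^ k"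
      by (rule prob_small_ball_le_of_small_columns[OF assms(3) Suc.prems(2)]) (use False in auto)
    also have "\<dots> \<le> (1 - p) ^ Suc r"
      using Suc.prems(1) assms(1,2) by (intro power_decreasing) auto
    finally show ?thesis .
  qed
qed

theorem lemma2p5:
  fixes p :: real and k :: nat
  assumes "0 < p" and "p \<le> 1/2" and "k \<ge> 1"
  shows "\<exists>\<theta>>0. \<forall>n::nat. \<forall>M :: nat \<Rightarrow> nat \<Rightarrow> real.
           orthonormal_rows k n M \<longrightarrow>
           levy_conc k (map_pmf (mat_image k n M) (ber_vec p n)) \<theta> \<le> (1 - p) ^ k"
proof -
  obtain \<theta> where "\<theta> > 0" and bound: "spread_small_ball_bound p \<theta> ((1 - p) ^ k)"
    using exists_spread_small_ball_bound[OF assms(1,2), of "(1 - p) ^ k"] assms(2) by auto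
  have "levy_conc k (map_pmf (mat_image k n M) (ber_vec p n)) \<theta> \<le> (1 - p) ^ k"
    if "orthonormal_rows k n M" for n M
    unfolding levy_conc_def
  proof (rule cSUP_least)
    show "{z :: nat \<Rightarrow> real. \<forall>i\<ge>k. z i = 0} \<noteq> {}"
      by (auto intro!: exI[of _ "\<lambda>_. 0"])
  next
    fix z
    show "measure_pmf.prob (map_pmf (mat_image k n M) (ber_vec p n)) {v. dist_N k v z \<le> \<theta>} \<le> (1 - p) ^ k"
      using prob_small_ball_le_pow[OF assms(1,2) bound order.refl that, of z] by (simp add: vimage_def)
  qed
  with \<open>\<theta> > 0\<close> show ?thesis
    by blast
qed

end
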